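(* Let $L\ge1$ be an integer and $g$ a real polynomial of degree at most $L$ with $g(0)=g'(0)=0$. Let $a<0<b$ and suppose $|g(x)|\le|x|$ for all $x\in[a,b]$. Then \[ |g(x)|\le \frac{8L^2}{b-a}x^2\quad\text{for all } x\in[a/4,b/4]\text{ with } |x|\le\frac{3(b-a)}{L^2}, \] and \[ |g(x)|\le \frac{4L}{\sqrt{|ab|}}x^2\quad\text{for all } x\in[a/4,b/4]\text{ with } |x|\le\frac{\sqrt{|ab|}}{4L}. \] *)

theory Defs
  imports "HOL-Computational_Algebra.Polynomial" Complex_Main
begin

end

theory Submission
  imports Defs "HOL-Complex_Analysis.Conformal_Mappings"
begin

(* Write g = x^2 k, so that h = x k has degree at most L - 1 and |h| <= 1 on [a, b].
   Under the Joukowski map J of [a, b], the circles |w| = 1/s (s >= 1) go to the ellipses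
   |z - a| + |z - b| = (b - a)/2 (s + 1/s), and the maximum modulus principle applied to
   w^(L-1) h(J w) on the unit disc gives the Bernstein-Walsh bound |h| <= s^(L-1) inside them.
   For s = 1 + 2/(L-1), resp. s = 1 + 1/(2(L-1)), the ellipse contains the circle |z| = R with
   R = (b - a)/L^2, resp. R = sqrt|ab|/(2L), while s^(L-1) <= e^2 <= 8, resp. e^(1/2) <= 2.
   The maximum modulus principle for k = h/z on that disc then bounds |k(x)| by 8/R, resp. 2/R,
   for |x| <= R; for |x| > R the first bound already follows from |g(x)| <= |x|, so it holds
   on all of [a, b]. *)

definition joukowski :: "real \<Rightarrow> real \<Rightarrow> complex \<Rightarrow> complex" where
  "joukowski a b w = of_real ((a + b) / 2) + of_real ((b - a) / 2) * (w + 1 / w) / 2"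

lemma joukowski_unit_circle:
  assumes "cmod u = 1"
  shows "joukowski a b u = of_real ((a + b) / 2 + (b - a) / 2 * Re u)"
proof -
  have "1 / u = cnj u"
    using assms by (simp add: complex_div_cnj[of 1 u])
  then show ?thesis
    by (simp add: joukowski_def complex_add_cnj)
qed

lemma joukowski_unit_circle_mem:
  assumes "a < b" "cmod u = 1"
  shows "(a + b) / 2 + (b - a) / 2 * Re u \<in> {a..b}"
proof -
  have "\<bar>Re u\<bar> \<le> 1" using abs_Re_le_cmod[of u] assms(2) by simp
  then have "\<bar>(b - a) / 2 * Re u\<bar> \<le> (b - a) / 2"
    using assms(1) by (simp add: abs_mult mult_left_le)
  then show ?thesis by (auto simp: abs_le_iff field_simps)
qed

lemma le_of_add_inverse_le:
  fixes x y :: real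
  assumes "1 \<le> x" "1 \<le> y" "x + 1 / x \<le> y + 1 / y"
  shows "x \<le> y"
proof (rule ccontr)
  assume "\<not> x \<le> y"
  then have "y < x" by simp
  moreover have "1 * 1 < x * y"
    using \<open>y < x\<close> assms by (intro mult_less_le_imp_less) auto
  ultimately have "0 < (x - y) * (x * y - 1) / (x * y)"
    using assms by (intro divide_pos_pos mult_pos_pos) auto
  also have "\<dots> = x + 1 / x - (y + 1 / y)"
    using assms by (simp add: field_simps)
  finally show False using assms(3) by linarith
qed

lemma poly_eq_sum_atMost:
  fixes p :: "'a::{comm_semiring_0,semiring_1} poly"
  assumes "degree p \<le> N"
  shows "poly p x = (\<Sum>i\<le>N. coeff p i * x ^ i)"
proof -
  have "poly p x = (\<Sum>i\<le>degree p. coeff p i * x ^ i)" by (rule poly_altdef)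
  also have "\<dots> = (\<Sum>i\<le>N. coeff p i * x ^ i)"
    by (rule sum.mono_neutral_left) (use assms in \<open>auto simp: coeff_eq_0\<close>)
  finally show ?thesis .
qed

lemma norm_poly_joukowski_le:
  fixes p :: "complex poly"
  assumes ab: "a < b" and deg: "degree p \<le> N"
    and bnd: "\<forall>t\<in>{a..b}. cmod (poly p (of_real t)) \<le> 1"
    and "w \<noteq> 0" "cmod w \<le> 1"
  shows "cmod (poly p (joukowski a b w)) \<le> (1 / cmod w) ^ N"
proof -
  define Q :: "complex \<Rightarrow> complex"
    where "Q u = of_real ((a + b) / 2) * u + of_real ((b - a) / 2) * (u^2 + 1) / 2" for u
  define F where "F u = (\<Sum>i\<le>N. coeff p i * Q u ^ i * u ^ (N - i))" for u
  \<comment> \<open>\<open>F u = u^N p(J u)\<close>, the pole of \<open>J\<close> at \<open>0\<close> being absorbed by \<open>u^N\<close>\<close>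
  have F_eq: "F u = u ^ N * poly p (joukowski a b u)" if "u \<noteq> 0" for u
  proof -
    have Q: "Q u = u * joukowski a b u"
      using that by (simp add: Q_def joukowski_def field_simps power2_eq_square)
    have "u ^ N * poly p (joukowski a b u)
        = (\<Sum>i\<le>N. coeff p i * (u ^ i * joukowski a b u ^ i) * u ^ (N - i))"
      unfolding poly_eq_sum_atMost[OF deg] sum_distrib_left
    proof (rule sum.cong)
      fix i assume "i \<in> {..N}"
      then have "u ^ N = u ^ i * u ^ (N - i)" by (simp flip: power_add)
      then show "u ^ N * (coeff p i * joukowski a b u ^ i)
          = coeff p i * (u ^ i * joukowski a b u ^ i) * u ^ (N - i)"
        by (simp add: algebra_simps)
    qed simp
    then show ?thesis
      by (simp add: F_def Q power_mult_distrib)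
  qed
  have "F holomorphic_on ball 0 1"
    unfolding F_def Q_def by (auto intro!: holomorphic_intros)
  moreover have "continuous_on (cball 0 1) F"
    unfolding F_def Q_def by (auto intro!: continuous_intros)
  moreover have "cmod (F u) \<le> 1" if "u \<in> frontier (cball 0 1)" for u
  proof -
    have u: "cmod u = 1" using that by simp
    then have "cmod (poly p (joukowski a b u)) \<le> 1"
      using bnd joukowski_unit_circle_mem[OF ab u] unfolding joukowski_unit_circle[OF u] by blast
    moreover have "u \<noteq> 0" using u by auto
    ultimately show ?thesis using F_eq u by (simp add: norm_mult norm_power)
  qed
  ultimately have "cmod (F w) \<le> 1"
    using maximum_modulus_frontier[of F "cball 0 1"] assms by auto
  then have "cmod w ^ N * cmod (poly p (joukowski a b w)) \<le> 1"
    using F_eq \<open>w \<noteq> 0\<close> by (simp add: norm_mult norm_power)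
  then show ?thesis
    using \<open>w \<noteq> 0\<close> by (simp add: field_simps power_one_over mult.commute)
qed

lemma joukowski_onto_disc:
  assumes "a < b"
  obtains w where "w \<noteq> 0" "cmod w \<le> 1" "z = joukowski a b w"
proof -
  define u where "u = (z - of_real ((a + b) / 2)) / of_real ((b - a) / 2)"
  define r where "r = csqrt (u^2 - 1)"
  have prod: "(u - r) * (u + r) = 1"
    by (simp add: r_def algebra_simps power2_eq_square[symmetric])
  then have nonzero: "u - r \<noteq> 0" "u + r \<noteq> 0" by auto
  have z: "z = joukowski a b w" if "w * v = 1" "w + v = 2 * u" for w v
  proof -
    have "1 / w = v" using that(1) by (metis divide_eq_eq mult.commute mult_zero_left zero_neq_one)
    then show ?thesis using that(2) assms by (simp add: joukowski_def u_def field_simps)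
  qed
  have "cmod (u - r) * cmod (u + r) = 1" using prod by (metis norm_mult norm_one)
  then have "cmod (u - r) \<le> 1 \<or> cmod (u + r) \<le> 1"
    using mult_strict_mono[of 1 "cmod (u - r)" 1 "cmod (u + r)"] by force
  then show ?thesis
  proof
    assume "cmod (u - r) \<le> 1"
    then show ?thesis using that[of "u - r"] z[of "u - r" "u + r"] prod nonzero by auto
  next
    assume "cmod (u + r) \<le> 1"
    then show ?thesis
      using that[of "u + r"] z[of "u + r" "u - r"] prod nonzero by (auto simp: mult.commute)
  qed
qed

lemma focal_sum_joukowski:
  assumes "a < b" "w \<noteq> 0"
  shows "cmod (joukowski a b w - of_real a) + cmod (joukowski a b w - of_real b)
           = (b - a) / 2 * (cmod w + 1 / cmod w)"
proof -
  have ea: "joukowski a b w - of_real a = of_real ((b - a) / 2) * (w + 1)^2 / (2 * w)"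
    using assms by (simp add: joukowski_def field_simps power2_eq_square; simp add: algebra_simps)
  have eb: "joukowski a b w - of_real b = of_real ((b - a) / 2) * (w - 1)^2 / (2 * w)"
    using assms by (simp add: joukowski_def field_simps power2_eq_square; simp add: algebra_simps)
  have parallelogram: "cmod (w + 1)^2 + cmod (w - 1)^2 = 2 * cmod w ^ 2 + 2"
    unfolding cmod_power2 by (simp add: power2_eq_square algebra_simps)
  have "cmod (joukowski a b w - of_real a) + cmod (joukowski a b w - of_real b)
      = (b - a) / 2 * (cmod (w + 1)^2 + cmod (w - 1)^2) / (2 * cmod w)"
    unfolding ea eb using assms norm_of_real[where 'a = complex, of "b - a"]
    by (simp add: norm_mult norm_divide norm_power add_divide_distrib distrib_left)
  also have "\<dots> = (b - a) / 2 * (cmod w + 1 / cmod w)"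
    unfolding parallelogram using assms by (simp add: field_simps power2_eq_square)
  finally show ?thesis .
qed

lemma bernstein_walsh_ellipse:
  fixes p :: "complex poly"
  assumes ab: "a < b" and deg: "degree p \<le> N"
    and bnd: "\<forall>t\<in>{a..b}. cmod (poly p (of_real t)) \<le> 1"
    and s: "s \<ge> 1"
    and z: "cmod (z - of_real a) + cmod (z - of_real b) \<le> (b - a) / 2 * (s + 1 / s)"
  shows "cmod (poly p z) \<le> s ^ N"
proof -
  obtain w where w: "w \<noteq> 0" "cmod w \<le> 1" and zw: "z = joukowski a b w"
    using joukowski_onto_disc[OF ab] .
  have "(b - a) / 2 * (cmod w + 1 / cmod w) \<le> (b - a) / 2 * (s + 1 / s)"
    using z unfolding zw focal_sum_joukowski[OF ab w(1)] .
  then have "cmod w + 1 / cmod w \<le> s + 1 / s"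
    using ab by simp
  moreover have "1 / (1 / cmod w) = cmod w" by simp
  ultimately have "1 / cmod w + 1 / (1 / cmod w) \<le> s + 1 / s"
    by linarith
  moreover have "1 \<le> 1 / cmod w"
    using w by (simp add: le_divide_eq_1_pos)
  ultimately have "1 / cmod w \<le> s"
    using le_of_add_inverse_le[OF _ s] by blast
  then have "(1 / cmod w) ^ N \<le> s ^ N"
    by (rule power_mono) simp
  then show ?thesis
    using norm_poly_joukowski_le[OF ab deg bnd w] unfolding zw by (rule order_trans[rotated])
qed

lemma norm_add_of_real_le:
  fixes z :: complex
  assumes A: "A > 0"
  shows "cmod (z + of_real A) \<le> A + Re z + cmod z ^ 2 / (2 * A)"
proof (rule power2_le_imp_le)
  define X Y where "X = Re z" and "Y = Im z"
  have z: "cmod z ^ 2 = X^2 + Y^2" and zA: "cmod (z + of_real A) ^ 2 = (X + A)^2 + Y^2"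
    unfolding X_def Y_def by (simp_all add: cmod_power2)
  have "(A + X + (X^2 + Y^2) / (2 * A))^2 - ((X + A)^2 + Y^2) = (X + (X^2 + Y^2) / (2 * A))^2"
    using A by (simp add: field_simps power2_eq_square; simp add: algebra_simps)
  then show "cmod (z + of_real A) ^ 2 \<le> (A + Re z + cmod z ^ 2 / (2 * A))^2"
    unfolding zA z X_def[symmetric] using zero_le_power2[of "X + (X^2 + Y^2) / (2 * A)"] by linarith
  have "A + X + (X^2 + Y^2) / (2 * A) = (X + A)^2 / (2 * A) + A / 2 + Y^2 / (2 * A)"
    using A by (simp add: field_simps power2_eq_square; simp add: algebra_simps)
  then show "0 \<le> A + Re z + cmod z ^ 2 / (2 * A)"
    unfolding z X_def[symmetric] using A by simp
qed

lemma norm_diff_of_real_neg_le: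
  fixes z :: complex
  assumes "a < 0"
  shows "cmod (z - of_real a) \<le> Re z - a + cmod z ^ 2 / (2 * (- a))"
  using norm_add_of_real_le[of "- a" z] assms by simp

lemma norm_diff_of_real_pos_le:
  fixes z :: complex
  assumes "b > 0"
  shows "cmod (z - of_real b) \<le> b - Re z + cmod z ^ 2 / (2 * b)"
  using norm_add_of_real_le[OF assms, of "- z"] by (simp add: norm_minus_commute)

lemma focal_sum_circle_le_geometric:
  fixes z :: complex
  assumes "a < 0" "0 < b"
  shows "cmod (z - of_real a) + cmod (z - of_real b) \<le> (b - a) + cmod z ^ 2 * (b - a) / (2 * (- a * b))"
proof -
  have "cmod z ^ 2 / (2 * (- a)) + cmod z ^ 2 / (2 * b) = cmod z ^ 2 * (b - a) / (2 * (- a * b))"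
    using assms by (simp add: field_simps)
  then show ?thesis
    using norm_diff_of_real_neg_le[OF assms(1), of z] norm_diff_of_real_pos_le[OF assms(2), of z]
    by linarith
qed

lemma focal_sum_circle_le_width:
  fixes z :: complex
  assumes a: "a < 0" and b: "0 < b"
  shows "cmod (z - of_real a) + cmod (z - of_real b) \<le> (b - a) + 2 * cmod z + cmod z ^ 2 / (b - a)"
proof -
  have Re: "\<bar>Re z\<bar> \<le> cmod z" by (rule abs_Re_le_cmod)
  have triangle: "cmod (z - of_real c) \<le> cmod z + \<bar>c\<bar>" for c
    using norm_triangle_ineq4[of z "of_real c"] by simp
  \<comment> \<open>the quadratic estimate is used at the endpoint farther from \<open>0\<close>\<close>
  show ?thesis
  proof (cases "b \<ge> - a")
    case True
    then have "cmod z ^ 2 / (2 * b) \<le> cmod z ^ 2 / (b - a)"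
      using a b by (intro divide_left_mono) auto
    then show ?thesis
      using norm_diff_of_real_pos_le[OF b, of z] triangle[of a] Re a by linarith
  next
    case False
    then have "cmod z ^ 2 / (2 * (- a)) \<le> cmod z ^ 2 / (b - a)"
      using a b by (intro divide_left_mono) (auto simp: mult_neg_pos)
    then show ?thesis
      using norm_diff_of_real_neg_le[OF a, of z] triangle[of b] Re b by linarith
  qed
qed

lemma norm_poly_le_div_radius:
  fixes k :: "complex poly"
  assumes R: "R > 0" and circle: "\<And>z. cmod z = R \<Longrightarrow> cmod (z * poly k z) \<le> B"
    and x: "cmod x \<le> R"
  shows "cmod (poly k x) \<le> B / R"
proof (rule maximum_modulus_frontier[of "poly k" "cball 0 R"])
  show "poly k holomorphic_on interior (cball 0 R)"
    by (simp add: poly_altdef; intro holomorphic_intros)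
  show "continuous_on (closure (cball 0 R)) (poly k)"
    by (simp add: poly_altdef; intro continuous_intros)
  show "bounded (cball (0::complex) R)" "x \<in> cball 0 R"
    using x by simp_all
  fix z :: complex assume "z \<in> frontier (cball 0 R)"
  then have "R * cmod (poly k z) \<le> B" using circle[of z] R by (simp add: norm_mult)
  then show "cmod (poly k z) \<le> B / R" using R by (simp add: field_simps mult.commute)
qed

lemma poly_map_poly_of_real:
  "poly (map_poly of_real p) (of_real x) = of_real (poly p x)"
  by (induction p) (auto simp: map_poly_pCons)

lemma double_root_at_0:
  assumes "poly p 0 = 0" "poly (pderiv p) 0 = 0"
  obtains k where "p = pCons 0 (pCons 0 k)"
proof -
  obtain c q where p: "p = pCons c q" by (cases p)
  obtain d k where q: "q = pCons d k" by (cases q)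
  show ?thesis using assms that by (simp add: p q pderiv_pCons)
qed

lemma abs_poly_le_from_focal_circle:
  fixes g :: "real poly"
  assumes deg: "degree g \<le> Suc N" and "poly g 0 = 0" "poly (pderiv g) 0 = 0"
    and ab: "a < b" and g_le: "\<forall>t\<in>{a..b}. \<bar>poly g t\<bar> \<le> \<bar>t\<bar>"
    and R: "R > 0" and s: "s \<ge> 1"
    and circle: "\<And>z. cmod z = R \<Longrightarrow>
                   cmod (z - of_real a) + cmod (z - of_real b) \<le> (b - a) / 2 * (s + 1 / s)"
    and x: "\<bar>x\<bar> \<le> R"
  shows "\<bar>poly g x\<bar> \<le> s ^ N / R * x^2"
proof -
  obtain k where g: "g = pCons 0 (pCons 0 k)"
    using double_root_at_0 assms(2,3) .
  define h where "h = map_poly complex_of_real (pCons 0 k)"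
  define kC where "kC = map_poly complex_of_real k"
  have h_kC: "poly h z = z * poly kC z" for z
    by (simp add: h_def kC_def map_poly_pCons)
  have "\<bar>t * poly k t\<bar> \<le> 1" if "t \<in> {a..b}" for t
  proof (cases "t = 0")
    case False
    have "\<bar>poly g t\<bar> \<le> \<bar>t\<bar>" using g_le that by blast
    then have "\<bar>t\<bar> * \<bar>t * poly k t\<bar> \<le> \<bar>t\<bar> * 1"
      by (simp add: g abs_mult)
    then show ?thesis using False by simp
  qed simp
  then have h_le: "\<forall>t\<in>{a..b}. cmod (poly h (of_real t)) \<le> 1"
    unfolding h_def poly_map_poly_of_real norm_of_real by simp
  have "degree (pCons 0 k) \<le> N"
    using deg by (cases "k = 0") (simp_all add: g)
  then have "degree h \<le> N"
    by (simp add: h_def degree_map_poly)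
  then have "cmod (z * poly kC z) \<le> s ^ N" if "cmod z = R" for z
    using bernstein_walsh_ellipse[OF ab _ h_le s circle[OF that]] by (simp only: h_kC)
  then have "\<bar>poly k x\<bar> \<le> s ^ N / R"
    using norm_poly_le_div_radius[OF R, of kC "s ^ N" "of_real x"] x
    by (simp add: kC_def poly_map_poly_of_real)
  then have "x^2 * \<bar>poly k x\<bar> \<le> x^2 * (s ^ N / R)"
    by (intro mult_left_mono) auto
  moreover have "\<bar>poly g x\<bar> = x^2 * \<bar>poly k x\<bar>"
    by (simp add: g abs_mult power2_eq_square)
  ultimately show ?thesis
    by (simp add: mult.commute)
qed

lemma square_one_plus_inverse_le:
  fixes u :: real
  assumes "u > 1"
  shows "(1 + 1 / u)^2 \<le> (u + 1) / (u - 1)"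
proof -
  have "(u + 1) * (u^2 - 1) \<le> (u + 1) * u^2"
    using assms by (intro mult_left_mono) auto
  then have "(u + 1)^2 * (u - 1) \<le> (u + 1) * u^2"
    by (simp add: power2_eq_square algebra_simps)
  then show ?thesis
    using assms by (simp add: field_simps power2_eq_square)
qed

lemma exp_2_le_8: "exp (2::real) \<le> 8"
proof -
  have "exp (1/16::real) \<le> 1 + 1/16 + (1/16)^2" by (rule exp_bound) auto
  then have "exp (1/16::real) \<le> 273/256" by (simp add: power2_eq_square)
  moreover have "exp (2::real) = exp (1/16) ^ 32" using exp_of_nat_mult[of 32 "1/16::real"] by simp
  ultimately have "exp (2::real) \<le> (273/256) ^ 32" by (simp add: power_mono)
  also have "\<dots> \<le> 8" by (simp add: power_divide divide_le_eq)
  finally show ?thesis .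
qed

lemma abs_poly_le_width_bound:
  fixes g :: "real poly"
  assumes L: "L \<ge> 2" and deg: "degree g \<le> L" and g0: "poly g 0 = 0" "poly (pderiv g) 0 = 0"
    and a: "a < 0" and b: "0 < b" and g_le: "\<forall>t\<in>{a..b}. \<bar>poly g t\<bar> \<le> \<bar>t\<bar>"
    and x: "x \<in> {a..b}"
  shows "\<bar>poly g x\<bar> \<le> 8 * (real L)^2 / (b - a) * x^2"
proof -
  define R where "R = (b - a) / (real L)^2"
  define n where "n = L - 1"
  define s where "s = 1 + 2 / real n"
  have R: "R > 0" using a b L by (simp add: R_def)
  have n: "real n > 0" "real L = real n + 1" "degree g \<le> Suc n"
    using L deg by (simp_all add: n_def)
  have s: "s \<ge> 1" by (simp add: s_def)
  have "(b - a) + 2 * R + R^2 / (b - a) = (b - a) * (1 + 1 / (real L)^2)^2"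
    using a b L by (simp add: R_def field_simps power2_eq_square)
  also have "\<dots> \<le> (b - a) * (((real L)^2 + 1) / ((real L)^2 - 1))"
    using a b L by (intro mult_left_mono square_one_plus_inverse_le) auto
  also have "\<dots> = (b - a) / 2 * (s + 1 / s)"
  proof -
    have "(real n + 1)^2 - 1 > 0"
      using n(1) by (simp add: power2_eq_square algebra_simps add_pos_pos)
    then have eq: "((real L)^2 + 1) / ((real L)^2 - 1) = (s + 1 / s) / 2"
      using n(1) unfolding s_def n(2)
      by (simp add: divide_simps power2_eq_square) (simp add: algebra_simps)
    show ?thesis unfolding eq by simp
  qed
  finally have circle: "cmod (z - of_real a) + cmod (z - of_real b) \<le> (b - a) / 2 * (s + 1 / s)"
    if "cmod z = R" for z
    using focal_sum_circle_le_width[OF a b, of z, unfolded that] by linarith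
  have "s ^ n \<le> exp 2"
    using exp_ge_one_plus_x_over_n_power_n[of n 2] n by (simp add: s_def)
  then have "s ^ n / R * x^2 \<le> 8 / R * x^2"
    using exp_2_le_8 R by (intro mult_right_mono divide_right_mono) auto
  moreover have "\<bar>poly g x\<bar> \<le> s ^ n / R * x^2" if "\<bar>x\<bar> \<le> R"
    using abs_poly_le_from_focal_circle[OF n(3) g0 _ g_le R s circle that] a b by simp
  moreover have "\<bar>x\<bar> \<le> 8 / R * x^2" if "\<not> \<bar>x\<bar> \<le> R"
  proof -
    have "\<bar>x\<bar> * 1 \<le> \<bar>x\<bar> * (8 / R * \<bar>x\<bar>)"
      using that R by (intro mult_left_mono) (auto simp: field_simps)
    then show ?thesis
      by (simp add: power2_eq_square abs_mult_self algebra_simps)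
  qed
  ultimately have "\<bar>poly g x\<bar> \<le> 8 / R * x^2"
    using g_le x by force
  then show ?thesis by (simp add: R_def)
qed

lemma abs_poly_le_geometric_mean_bound:
  fixes g :: "real poly"
  assumes L: "L \<ge> 2" and deg: "degree g \<le> L" and g0: "poly g 0 = 0" "poly (pderiv g) 0 = 0"
    and a: "a < 0" and b: "0 < b" and g_le: "\<forall>t\<in>{a..b}. \<bar>poly g t\<bar> \<le> \<bar>t\<bar>"
    and x: "\<bar>x\<bar> \<le> sqrt \<bar>a * b\<bar> / (2 * real L)"
  shows "\<bar>poly g x\<bar> \<le> 4 * real L / sqrt \<bar>a * b\<bar> * x^2"
proof -
  define R where "R = sqrt \<bar>a * b\<bar> / (2 * real L)"
  define n where "n = L - 1"
  define s where "s = 1 + 1 / (2 * real n)"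
  have ab: "\<bar>a * b\<bar> = - a * b" "sqrt \<bar>a * b\<bar> > 0" using a b by (auto simp: abs_mult mult_neg_pos)
  have R: "R > 0" using ab L by (simp add: R_def)
  have n: "real n > 0" "real L = real n + 1" "degree g \<le> Suc n"
    using L deg by (simp_all add: n_def)
  have s: "s \<ge> 1" by (simp add: s_def)
  have R2: "R^2 = - a * b / (4 * (real L)^2)"
    using ab by (simp add: R_def power_divide power_mult_distrib)
  have "R^2 * (b - a) / (2 * (- a * b)) = (b - a) / (8 * (real L)^2)"
    unfolding R2 using L a b by (simp add: field_simps)
  then have "(b - a) + R^2 * (b - a) / (2 * (- a * b)) = (b - a) * (1 + 1 / (8 * (real n + 1)^2))"
    by (simp add: n(2) distrib_left)
  also have "\<dots> \<le> (b - a) / 2 * (s + 1 / s)"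
  proof -
    have "1 + 1 / (8 * (real n + 1)^2) \<le> (s + 1 / s) / 2"
      using n(1) unfolding s_def by (simp add: divide_simps power2_eq_square) (simp add: algebra_simps)
    then show ?thesis using a b by (simp add: mult_left_mono)
  qed
  finally have circle: "cmod (z - of_real a) + cmod (z - of_real b) \<le> (b - a) / 2 * (s + 1 / s)"
    if "cmod z = R" for z
    using focal_sum_circle_le_geometric[OF a b, of z, unfolded that] by linarith
  have "\<bar>poly g x\<bar> \<le> s ^ n / R * x^2"
    using abs_poly_le_from_focal_circle[OF n(3) g0 _ g_le R s circle x[folded R_def]] a b by simp
  also have "s ^ n \<le> exp (1 / 2)"
    using exp_ge_one_plus_x_over_n_power_n[of n "1 / 2"] n by (simp add: s_def)
  then have "s ^ n / R * x^2 \<le> 2 / R * x^2"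
    using exp_half_le2 R by (intro mult_right_mono divide_right_mono) auto
  also have "2 / R = 4 * real L / sqrt \<bar>a * b\<bar>"
    by (simp add: R_def)
  finally show ?thesis .
qed

theorem lemma3p13:
  fixes L :: nat and g :: "real poly" and a b :: real
  assumes "L \<ge> 1"
    and "degree g \<le> L"
    and "poly g 0 = 0"
    and "poly (pderiv g) 0 = 0"
    and "a < 0" and "0 < b"
    and "\<forall>x\<in>{a..b}. \<bar>poly g x\<bar> \<le> \<bar>x\<bar>"
  shows "(\<forall>x\<in>{a/4..b/4}. \<bar>x\<bar> \<le> 3 * (b - a) / (real L)^2 \<longrightarrow>
            \<bar>poly g x\<bar> \<le> 8 * (real L)^2 / (b - a) * x^2)
       \<and> (\<forall>x\<in>{a/4..b/4}. \<bar>x\<bar> \<le> sqrt \<bar>a * b\<bar> / (4 * real L) \<longrightarrow>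
            \<bar>poly g x\<bar> \<le> 4 * real L / sqrt \<bar>a * b\<bar> * x^2)"
proof (cases "L = 1")
  case True
  obtain k where "g = pCons 0 (pCons 0 k)"
    using double_root_at_0 assms(3,4) .
  with True assms(2) have "g = 0"
    by (simp add: degree_pCons_eq_if split: if_splits)
  then show ?thesis by simp
next
  case False
  then have L: "L \<ge> 2" using assms(1) by simp
  have "{a/4..b/4} \<subseteq> {a..b}" using assms(5,6) by auto
  moreover have "sqrt \<bar>a * b\<bar> / (4 * real L) \<le> sqrt \<bar>a * b\<bar> / (2 * real L)"
    using L by (intro divide_left_mono) auto
  ultimately show ?thesis
    using abs_poly_le_width_bound[OF L assms(2-7)] abs_poly_le_geometric_mean_bound[OF L assms(2-7)]
    by (meson order_trans subsetD)
qed

end
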